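(* For every integer $s>2$ and every odd integer $k$ with $1<k<2s$, $F_{s,k}(2s)=0$.
   Context: For an integer $j\ge0$, $\binom{x}{j}=x(x-1)\cdots(x-j+1)/j!$ as a polynomial in $x$, and $\binom{x}{j}=0$ for $j<0$. For integers $s\ge1$, $k\ge1$, the Moser polynomial is $F_{s,k}(x)=\sum_{p=1}^{s}(-1)^{p-1}p^{k-1}\binom{x}{s-p}$. *)

theory Defs
  imports Complex_Main
begin

text \<open>Since 1 \<le> p \<le> s, s - p \<ge> 0, so no negative lower index occurs.\<close>
definition moserF :: "nat \<Rightarrow> nat \<Rightarrow> 'a::field_char_0 \<Rightarrow> 'a" where
  "moserF s k x = (\<Sum>p=1..s. (-1)^(p-1) * of_nat p ^ (k-1) * (x gchoose (s-p)))"

end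

theory Submission
  imports Defs
begin

text \<open>The alternating binomial sum \<open>\<Sum>j\<le>n. (-1)^j (n choose j) P(j)\<close> is the \<open>n\<close>-th forward
  difference of \<open>P\<close> up to sign, so it vanishes for every polynomial \<open>P\<close> of degree below \<open>n\<close>.
  Take \<open>n = 2s\<close> and \<open>P(j) = (s - j)^(k-1)\<close>: since \<open>k - 1\<close> is even, the terms at
  \<open>j = s - p\<close> and \<open>j = s + p\<close> coincide, the central term vanishes, and what remains is
  \<open>\<plusminus>2 F_{s,k}(2s)\<close>.\<close>

lemma alternating_binomial_sum_power_eq_0:
  fixes c :: "'a::comm_ring_1"
  assumes "m < n"
  shows "(\<Sum>j\<le>n. (-1)^j * of_nat (n choose j) * (c - of_nat j) ^ m) = 0"
  using assms
proof (induction m arbitrary: n c)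
  case 0
  then show ?case using choose_alternating_sum[of n] by simp
next
  case (Suc m)
  then obtain n' where n: "n = Suc n'" and "m < n'"
    by (metis Suc_lessE)
  \<comment> \<open>Write \<open>(c - j)^(m+1) = c (c - j)^m - j (c - j)^m\<close>; absorption \<open>j (n choose j) = n (n-1 choose j-1)\<close>
     turns the second sum into the sum for \<open>n - 1\<close> and \<open>c - 1\<close>.\<close>
  have weighted: "(\<Sum>j\<le>n. (-1)^j * of_nat (n choose j) * of_nat j * (c - of_nat j) ^ m)
      = - of_nat n * (\<Sum>i\<le>n'. (-1)^i * of_nat (n' choose i) * ((c - 1) - of_nat i) ^ m)"
  proof -
    have "(\<Sum>j\<le>n. (-1)^j * of_nat (n choose j) * of_nat j * (c - of_nat j) ^ m)
        = (\<Sum>i\<le>n'. (-1)^Suc i * of_nat (Suc n' choose Suc i) * of_nat (Suc i) * (c - of_nat (Suc i)) ^ m)"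
      unfolding n by (subst sum.atMost_Suc_shift) simp
    also have "\<dots> = (\<Sum>i\<le>n'. - of_nat n * ((-1)^i * of_nat (n' choose i) * ((c - 1) - of_nat i) ^ m))"
    proof (rule sum.cong[OF refl])
      fix i
      have "(-1)^Suc i * of_nat (Suc n' choose Suc i) * of_nat (Suc i) * (c - of_nat (Suc i)) ^ m
          = - ((-1)^i * of_nat (Suc i * (Suc n' choose Suc i)) * ((c - 1) - of_nat i) ^ m)"
        by (simp add: algebra_simps del: binomial_Suc_Suc of_nat_Suc) (simp add: algebra_simps)
      also have "Suc i * (Suc n' choose Suc i) = n * (n' choose i)"
        unfolding n by (rule Suc_times_binomial)
      finally show "(-1)^Suc i * of_nat (Suc n' choose Suc i) * of_nat (Suc i) * (c - of_nat (Suc i)) ^ m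
          = - of_nat n * ((-1)^i * of_nat (n' choose i) * ((c - 1) - of_nat i) ^ m)"
        by (simp add: algebra_simps)
    qed
    finally show ?thesis by (simp add: sum_distrib_left)
  qed
  have "(\<Sum>j\<le>n. (-1)^j * of_nat (n choose j) * (c - of_nat j) ^ Suc m)
      = c * (\<Sum>j\<le>n. (-1)^j * of_nat (n choose j) * (c - of_nat j) ^ m)
        - (\<Sum>j\<le>n. (-1)^j * of_nat (n choose j) * of_nat j * (c - of_nat j) ^ m)"
    by (simp add: sum_distrib_left sum_subtractf[symmetric] algebra_simps)
  also have "\<dots> = 0"
    using Suc.IH[of n c] Suc.IH[of n' "c - 1"] \<open>m < n'\<close> n weighted by simp
  finally show ?case .
qed

lemma sum_atMost_double_centered:
  fixes f :: "nat \<Rightarrow> 'a::comm_monoid_add"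
  shows "(\<Sum>j\<le>2*s. f j) = f s + (\<Sum>p=1..s. f (s - p) + f (s + p))"
proof (induction s arbitrary: f)
  case 0 then show ?case by simp
next
  case (Suc s)
  have "(\<Sum>j\<le>2 * Suc s. f j) = f 0 + ((\<Sum>j\<le>2*s. f (Suc j)) + f (2 * Suc s))"
    unfolding mult_Suc_right add_2_eq_Suc sum.atMost_Suc_shift[of f "Suc _"]
    by (simp only: sum.atMost_Suc)
  also have "(\<Sum>j\<le>2*s. f (Suc j)) = f (Suc s) + (\<Sum>p=1..s. f (Suc s - p) + f (Suc s + p))"
    using Suc.IH[of "\<lambda>j. f (Suc j)"] by (simp add: Suc_diff_le)
  also have "f 0 + ((f (Suc s) + (\<Sum>p=1..s. f (Suc s - p) + f (Suc s + p))) + f (2 * Suc s))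
      = f (Suc s) + (\<Sum>p=1..Suc s. f (Suc s - p) + f (Suc s + p))"
    by (simp add: sum.cl_ivl_Suc mult_2 add_ac)
  finally show ?case .
qed

lemma central_alternating_binomial_sum_eq_moserF:
  fixes s m :: nat
  assumes "even m" and "m > 0"
  shows "(\<Sum>j\<le>2*s. (-1)^j * of_nat (2*s choose j) * (of_nat s - of_nat j) ^ m)
       = 2 * (-1)^Suc s * (moserF s (Suc m) (of_nat (2*s)) :: 'a::field_char_0)"
proof -
  define h :: "nat \<Rightarrow> 'a" where
    "h j = (-1)^j * of_nat (2*s choose j) * (of_nat s - of_nat j) ^ m" for j
  have pair: "h (s - p) + h (s + p)
      = 2 * (-1)^Suc s * ((-1)^(p-1) * of_nat p ^ m * (of_nat (2*s) gchoose (s-p)))"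
    if "1 \<le> p" "p \<le> s" for p
  proof -
    have sign: "(-1::'a)^(s-p) = (-1)^(s+p)" "(-1::'a)^(s+p) = (-1)^Suc s * (-1)^(p-1)"
      using that by (auto simp: minus_one_power_iff)
    have "2*s choose (s+p) = 2*s choose (s-p)"
      using that binomial_symmetric[of "s+p" "2*s"] by simp
    then have "h (s + p) = h (s - p)"
      unfolding h_def using that \<open>even m\<close> sign(1) by (simp add: of_nat_diff)
    moreover have "h (s - p) = (-1)^Suc s * ((-1)^(p-1) * of_nat p ^ m * (of_nat (2*s) gchoose (s-p)))"
      unfolding h_def using that sign by (simp add: of_nat_diff binomial_gbinomial mult_ac)
    ultimately show ?thesis by simp
  qed
  have "(\<Sum>j\<le>2*s. h j) = h s + (\<Sum>p=1..s. h (s - p) + h (s + p))"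
    by (rule sum_atMost_double_centered)
  also have "h s = 0"
    unfolding h_def using \<open>m > 0\<close> by simp
  also have "(\<Sum>p=1..s. h (s - p) + h (s + p)) = 2 * (-1)^Suc s * moserF s (Suc m) (of_nat (2*s))"
    unfolding moserF_def by (simp add: pair sum_distrib_left)
  finally show ?thesis unfolding h_def by simp
qed

theorem mainTheorem20:
  fixes s k :: nat
  assumes "s > 2" and "odd k" and "1 < k" and "k < 2 * s"
  shows "moserF s k (of_nat (2 * s) :: rat) = 0"
proof -
  define m where "m = k - 1"
  have k: "k = Suc m" and "even m" and "m > 0" and "m < 2 * s"
    using assms(2-4) unfolding m_def by auto
  have "2 * (-1)^Suc s * moserF s k (of_nat (2 * s) :: rat)
      = (\<Sum>j\<le>2*s. (-1)^j * of_nat (2*s choose j) * (of_nat s - of_nat j) ^ m)"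
    unfolding k by (rule central_alternating_binomial_sum_eq_moserF[OF \<open>even m\<close> \<open>m > 0\<close>, symmetric])
  also have "\<dots> = 0"
    by (rule alternating_binomial_sum_power_eq_0[OF \<open>m < 2 * s\<close>])
  finally show ?thesis by simp
qed

end
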